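(* Let $\mathbf{L}=U^{\oplus3}\oplus[-2]^{\oplus2}$ and let $G\subset\mathrm{O}(\mathbf{L})$ be a subgroup with $|G|=2$ whose image $G^{\sharp}$ in $\mathrm{O}(\mathbf{L}^{\sharp})$ is trivial. Let $H\subset\mathbf{L}^{\sharp}$ be the embedding subgroup of the primitive embedding $\mathbf{L}_G\hookrightarrow\mathbf{L}$. Then: (a) if $H$ is trivial, $l((\mathbf{L}^G)^{\sharp})=l((\mathbf{L}_G)^{\sharp})+2$; (b) if $H\cong\mathbb{Z}/2\mathbb{Z}$, $l((\mathbf{L}^G)^{\sharp})=l((\mathbf{L}_G)^{\sharp})$; (c) if $H\cong(\mathbb{Z}/2\mathbb{Z})^{\oplus2}$, $l((\mathbf{L}^G)^{\sharp})=l((\mathbf{L}_G)^{\sharp})-2$.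
   Context: $U$ is the hyperbolic plane, $[n]$ the rank one lattice generated by a vector of square $n$. For a lattice $L$, $L^{\sharp}=L^*/L$ is the discriminant group and $l(L^{\sharp})$ its length (minimal number of generators). $G^{\sharp}$ is the image of $G$ under $\mathrm{O}(\mathbf{L})\to\mathrm{O}(\mathbf{L}^{\sharp})$. $\mathbf{L}^G$ is the invariant sublattice and $\mathbf{L}_G=(\mathbf{L}^G)^{\perp}$ the coinvariant sublattice. For a primitive sublattice $S\subset\mathbf{L}$, the embedding subgroup is $H=(\mathbf{L}^*\cap(S\otimes\mathbb{Q}))/S\subset\mathbf{L}^*/\mathbf{L}=\mathbf{L}^{\sharp}$ (the subgroup of $\mathbf{L}^{\sharp}$ in Nikulin's description of primitive embeddings; it satisfies $|\det(S^{\perp})|=|\det\mathbf{L}|\cdot|\det S|/|H|^2$). *)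

theory Defs
  imports "HOL-Analysis.Analysis" "HOL-Algebra.Elementary_Groups"
begin

section \<open>The lattice L = U^3 + [-2]^2, realised as Z^8 inside Q^8\<close>

type_synonym qvec = "rat ^ 8"
type_synonym imat = "int ^ 8 ^ 8"

text \<open>Gram matrix of U (+) U (+) U (+) [-2] (+) [-2] in the standard basis e_0,...,e_7.\<close>
definition gramL :: imat where
  "gramL = (\<chi> i j.
      if (i = 0 \<and> j = 1) \<or> (i = 1 \<and> j = 0) \<or> (i = 2 \<and> j = 3) \<or> (i = 3 \<and> j = 2)
         \<or> (i = 4 \<and> j = 5) \<or> (i = 5 \<and> j = 4) then 1
      else if (i = 6 \<and> j = 6) \<or> (i = 7 \<and> j = 7) then -2 else 0)"

text \<open>The bilinear form, extended Q-bilinearly to Q^8 = L (x) Q.\<close>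
definition bform :: "qvec \<Rightarrow> qvec \<Rightarrow> rat" where
  "bform x y = (\<Sum>i\<in>UNIV. \<Sum>j\<in>UNIV. x $ i * of_int (gramL $ i $ j) * y $ j)"

definition latL :: "qvec set" where
  "latL = {x. \<forall>i. x $ i \<in> \<int>}"

definition OL :: "imat set" where
  "OL = {M. transpose M ** gramL ** M = gramL}"

definition is_subgroup_OL :: "imat set \<Rightarrow> bool" where
  "is_subgroup_OL G \<longleftrightarrow> G \<subseteq> OL \<and> mat 1 \<in> G \<and> (\<forall>a\<in>G. \<forall>b\<in>G. a ** b \<in> G)
      \<and> (\<forall>a\<in>G. \<exists>b\<in>G. a ** b = mat 1 \<and> b ** a = mat 1)"

definition act :: "imat \<Rightarrow> qvec \<Rightarrow> qvec" where
  "act M x = map_matrix of_int M *v x"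

definition qspan :: "qvec set \<Rightarrow> qvec set" where
  "qspan S = {x. \<exists>cs::(rat \<times> qvec) list. (\<forall>p\<in>set cs. snd p \<in> S)
                  \<and> x = sum_list (map (\<lambda>p. (\<chi> i. fst p * snd p $ i)) cs)}"

definition zspan :: "qvec set \<Rightarrow> qvec set" where
  "zspan S = {x. \<exists>cs::(int \<times> qvec) list. (\<forall>p\<in>set cs. snd p \<in> S)
                  \<and> x = sum_list (map (\<lambda>p. (\<chi> i. of_int (fst p) * snd p $ i)) cs)}"

text \<open>Dual lattice S^* = Hom(S,Z) viewed inside S (x) Q.\<close>
definition dual :: "qvec set \<Rightarrow> qvec set" where
  "dual S = {x \<in> qspan S. \<forall>s\<in>S. bform x s \<in> \<int>}"

text \<open>Length l(S^#) of the discriminant group S^# = S^*/S: minimal number of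
  elements of S^* which together with S generate S^*.\<close>
definition disc_length :: "qvec set \<Rightarrow> nat" where
  "disc_length S = (LEAST k. \<exists>ys. length ys = k \<and> set ys \<subseteq> dual S
                        \<and> dual S = zspan (S \<union> set ys))"

definition coset :: "qvec \<Rightarrow> qvec set \<Rightarrow> qvec set" where
  "coset x S = (\<lambda>s. x + s) ` S"

definition quot_grp :: "qvec set \<Rightarrow> qvec set \<Rightarrow> qvec set monoid" where
  "quot_grp A S = \<lparr> carrier = (\<lambda>x. coset x S) ` A,
                    monoid.mult = (\<lambda>P Q. {p + q | p q. p \<in> P \<and> q \<in> Q}),
                    one = S \<rparr>"

definition invL :: "imat set \<Rightarrow> qvec set" where
  "invL G = {x \<in> latL. \<forall>g\<in>G. act g x = x}"

definition coinvL :: "imat set \<Rightarrow> qvec set" where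
  "coinvL G = {x \<in> latL. \<forall>y\<in>invL G. bform x y = 0}"

text \<open>G^# trivial: every element of G acts trivially on L^# = L^*/L.\<close>
definition trivial_on_disc :: "imat set \<Rightarrow> bool" where
  "trivial_on_disc G \<longleftrightarrow> (\<forall>g\<in>G. \<forall>x\<in>dual latL. act g x - x \<in> latL)"

text \<open>Embedding subgroup H = (L^* \<inter> (S (x) Q))/S of a primitive sublattice S.\<close>
definition emb_grp :: "qvec set \<Rightarrow> qvec set monoid" where
  "emb_grp S = quot_grp (dual latL \<inter> qspan S) S"

end

theory Submission
  imports Defs
begin

(* Let g be the non-trivial element of G and L+ = L^G, L- = L_G its (+1)- and (-1)-eigenlattices.
  Since g acts trivially on L^*/L, for x in the dual of L+ or L- the vector 2x pairs integrally with
  all of L^*, hence lies in L; so both discriminant groups are 2-elementary and have order 2^l.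
  Index counting in the chain L- + L+ <= L <= L^* <= L-^* + L+^* gives
  |L+^#| |H|^2 = 4 |L-^#|: the pairing with values in (1/2)Z/Z makes L and L^* mutual annihilators
  modulo L- + L+, and the projection of L to L-^* has annihilator H in L-^#.
  Annihilator sizes are computed by summing the {1,-1}-valued pairing over the quotient. *)

section \<open>Subgroups and quotients of abelian groups\<close>

definition add_subgroup :: "'a::ab_group_add set \<Rightarrow> bool" where
  "add_subgroup A \<longleftrightarrow> 0 \<in> A \<and> (\<forall>x\<in>A. \<forall>y\<in>A. x + y \<in> A) \<and> (\<forall>x\<in>A. - x \<in> A)"

lemma add_subgroupI:
  assumes "0 \<in> A" "\<And>x y. x \<in> A \<Longrightarrow> y \<in> A \<Longrightarrow> x + y \<in> A" "\<And>x. x \<in> A \<Longrightarrow> - x \<in> A"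
  shows "add_subgroup A"
  using assms unfolding add_subgroup_def by blast

lemma add_subgroup_zero: "add_subgroup A \<Longrightarrow> 0 \<in> A"
  and add_subgroup_add: "add_subgroup A \<Longrightarrow> x \<in> A \<Longrightarrow> y \<in> A \<Longrightarrow> x + y \<in> A"
  and add_subgroup_uminus: "add_subgroup A \<Longrightarrow> x \<in> A \<Longrightarrow> - x \<in> A"
  unfolding add_subgroup_def by blast+

lemma add_subgroup_diff: "add_subgroup A \<Longrightarrow> x \<in> A \<Longrightarrow> y \<in> A \<Longrightarrow> x - y \<in> A"
  using add_subgroup_add[of A x "- y"] add_subgroup_uminus[of A y] by simp

lemma add_subgroup_Int: "add_subgroup A \<Longrightarrow> add_subgroup B \<Longrightarrow> add_subgroup (A \<inter> B)"
  unfolding add_subgroup_def by blast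

definition cosets :: "'a::ab_group_add set \<Rightarrow> 'a set \<Rightarrow> 'a set set" where
  "cosets A S = (\<lambda>x. (+) x ` S) ` A"

lemma mem_coset_self: "add_subgroup S \<Longrightarrow> x \<in> (+) x ` S"
  using add_subgroup_zero by force

lemma coset_eq_iff:
  assumes "add_subgroup S"
  shows "(+) x ` S = (+) y ` S \<longleftrightarrow> x - y \<in> S"
proof
  assume "(+) x ` S = (+) y ` S"
  then have "x \<in> (+) y ` S" using mem_coset_self[OF assms] by metis
  then show "x - y \<in> S" by auto
next
  have sub: "(+) a ` S \<subseteq> (+) b ` S" if "a - b \<in> S" for a b
  proof
    fix z assume "z \<in> (+) a ` S"
    then obtain s where "s \<in> S" "z = a + s" by auto
    then show "z \<in> (+) b ` S"
      using add_subgroup_add[OF assms that] by (intro image_eqI[of _ _ "a - b + s"]) auto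
  qed
  assume "x - y \<in> S"
  moreover have "y - x \<in> S" using add_subgroup_uminus[OF assms \<open>x - y \<in> S\<close>] by simp
  ultimately show "(+) x ` S = (+) y ` S" using sub by blast
qed

lemma coset_eq_if_mem: "add_subgroup S \<Longrightarrow> y \<in> (+) x ` S \<Longrightarrow> (+) y ` S = (+) x ` S"
  by (auto simp: coset_eq_iff)

lemma translate_coset: "(+) y ` (+) x ` S = (+) (y + x) ` S" for y :: "'a::ab_group_add"
  by (metis add.commute translation_assoc)

lemma coset_subset: "add_subgroup A \<Longrightarrow> S \<subseteq> A \<Longrightarrow> x \<in> A \<Longrightarrow> (+) x ` S \<subseteq> A"
  using add_subgroup_add by blast

lemma cosets_mono: "A \<subseteq> B \<Longrightarrow> cosets A S \<subseteq> cosets B S"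
  unfolding cosets_def by auto

lemma cosets_self: "add_subgroup S \<Longrightarrow> cosets S S = {S}"
  unfolding cosets_def using add_subgroup_zero[of S] coset_eq_iff[of S _ 0]
  by auto

lemma mem_cosets_self: "add_subgroup S \<Longrightarrow> S \<subseteq> A \<Longrightarrow> S \<in> cosets A S"
  unfolding cosets_def using add_subgroup_zero[of S] by force

lemma card_cosets_pos: "add_subgroup S \<Longrightarrow> S \<subseteq> A \<Longrightarrow> finite (cosets A S) \<Longrightarrow> card (cosets A S) > 0"
  using mem_cosets_self card_gt_0_iff by blast

text \<open>Every use of \<open>rep\<close> below is independent of the chosen representative.\<close>
definition rep :: "'a set \<Rightarrow> 'a" where
  "rep c = (SOME x. x \<in> c)"

lemma rep_in_coset: "add_subgroup S \<Longrightarrow> rep ((+) x ` S) \<in> (+) x ` S"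
  unfolding rep_def using mem_coset_self by (metis someI)

lemma rep_cosets:
  assumes "add_subgroup S" "add_subgroup A" "S \<subseteq> A" "c \<in> cosets A S"
  shows "rep c \<in> A" "(+) (rep c) ` S = c"
proof -
  obtain x where x: "x \<in> A" "c = (+) x ` S" using assms(4) unfolding cosets_def by blast
  show "rep c \<in> A" using rep_in_coset[OF assms(1)] coset_subset[OF assms(2,3) x(1)] x(2) by blast
  show "(+) (rep c) ` S = c" using coset_eq_if_mem[OF assms(1) rep_in_coset[OF assms(1)]] x(2) by simp
qed

lemma card_image_eq_if_same_fibres:
  assumes "\<And>x y. x \<in> X \<Longrightarrow> y \<in> X \<Longrightarrow> f x = f y \<longleftrightarrow> g x = g y"
  shows "card (f ` X) = card (g ` X)" "finite (f ` X) \<longleftrightarrow> finite (g ` X)"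
proof -
  have "bij_betw (\<lambda>v. f (inv_into X g v)) (g ` X) (f ` X)"
  proof (rule bij_betw_imageI)
    show "inj_on (\<lambda>v. f (inv_into X g v)) (g ` X)"
      using assms by (auto intro!: inj_onI simp: inv_into_into f_inv_into_f)
    have "f (inv_into X g (g x)) = f x" if "x \<in> X" for x
      using assms that by (simp add: inv_into_into f_inv_into_f)
    then show "(\<lambda>v. f (inv_into X g v)) ` g ` X = f ` X"
      by (auto simp: image_image)
  qed
  then show "card (f ` X) = card (g ` X)" "finite (f ` X) \<longleftrightarrow> finite (g ` X)"
    by (auto simp: bij_betw_same_card bij_betw_finite)
qed

lemma card_cosets_eq_card_image:
  assumes "add_subgroup S" "\<And>x y. x \<in> A \<Longrightarrow> y \<in> A \<Longrightarrow> x - y \<in> S \<longleftrightarrow> f x = f y"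
  shows "card (cosets A S) = card (f ` A)" "finite (cosets A S) \<longleftrightarrow> finite (f ` A)"
  unfolding cosets_def using card_image_eq_if_same_fibres[of A "\<lambda>x. (+) x ` S" f]
  by (simp_all add: coset_eq_iff[OF assms(1)] assms(2))

lemma card_cosets_tower:
  assumes "add_subgroup S" "add_subgroup T" "add_subgroup A" "S \<subseteq> T" "T \<subseteq> A"
  shows "card (cosets A S) = card (cosets A T) * card (cosets T S)"
proof -
  define f where "f x = ((+) x ` T, (+) (x - rep ((+) x ` T)) ` S)" for x
  have rep_diff: "x - rep ((+) x ` T) \<in> T" for x
    using rep_in_coset[OF assms(2), of x] add_subgroup_uminus[OF assms(2)] by force
  have "card (cosets A S) = card (f ` A)"
  proof (rule card_cosets_eq_card_image[OF assms(1)])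
    fix x y assume "x \<in> A" "y \<in> A"
    show "x - y \<in> S \<longleftrightarrow> f x = f y"
    proof
      assume "x - y \<in> S"
      then have "(+) x ` T = (+) y ` T" using assms(4) coset_eq_iff[OF assms(2)] by blast
      then show "f x = f y" unfolding f_def using \<open>x - y \<in> S\<close> coset_eq_iff[OF assms(1)] by simp
    next
      assume "f x = f y"
      then have eqT: "(+) x ` T = (+) y ` T"
        and "(+) (x - rep ((+) x ` T)) ` S = (+) (y - rep ((+) y ` T)) ` S"
        unfolding f_def prod.inject by blast+
      from this(2) have "(x - rep ((+) x ` T)) - (y - rep ((+) y ` T)) \<in> S"
        by (simp only: coset_eq_iff[OF assms(1)])
      then show "x - y \<in> S" unfolding eqT by simp
    qed
  qed
  also have "f ` A = cosets A T \<times> cosets T S"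
  proof
    show "f ` A \<subseteq> cosets A T \<times> cosets T S" unfolding f_def cosets_def using rep_diff by auto
    show "cosets A T \<times> cosets T S \<subseteq> f ` A"
    proof
      fix p assume "p \<in> cosets A T \<times> cosets T S"
      then obtain a t where at: "a \<in> A" "t \<in> T" "p = ((+) a ` T, (+) t ` S)" unfolding cosets_def by auto
      have "(+) a ` T \<in> cosets A T" using at(1) unfolding cosets_def by blast
      then have ra: "rep ((+) a ` T) \<in> A" "rep ((+) a ` T) - a \<in> T"
        using rep_cosets[OF assms(2,3,5)] coset_eq_iff[OF assms(2)] by blast+
      define x where "x = rep ((+) a ` T) + t"
      have "(rep ((+) a ` T) - a) + t \<in> T" using ra(2) at(2) by (rule add_subgroup_add[OF assms(2)])
      then have "x - a \<in> T" by (simp add: x_def diff_add_eq)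
      then have "(+) x ` T = (+) a ` T" using coset_eq_iff[OF assms(2)] by blast
      then have "f x = p" unfolding f_def using at(3) by (simp add: x_def)
      moreover have "x \<in> A" unfolding x_def using ra(1) at(2) assms(5) add_subgroup_add[OF assms(3)] by blast
      ultimately show "p \<in> f ` A" by blast
    qed
  qed
  finally show ?thesis by (simp add: card_cartesian_product)
qed

lemma mem_translate_iff: "a \<in> (+) y ` Z \<longleftrightarrow> a - y \<in> Z" for y :: "'a::ab_group_add"
proof
  assume "a - y \<in> Z"
  then show "a \<in> (+) y ` Z" by (rule rev_image_eqI) (simp add: algebra_simps)
qed auto

lemma add_subgroup_Un_translate:
  assumes Z: "add_subgroup Z" and yy: "y + y \<in> Z"
  shows "add_subgroup (Z \<union> (+) y ` Z)"
proof -
  let ?U = "{a. a \<in> Z \<or> a - y \<in> Z}"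
  have "Z \<union> (+) y ` Z = ?U"
    using mem_translate_iff by blast
  moreover have "add_subgroup ?U"
  proof (rule add_subgroupI)
    fix a b assume a: "a \<in> ?U" and b: "b \<in> ?U"
    show "a + b \<in> ?U"
    proof (cases "a \<in> Z"; cases "b \<in> Z")
      assume "a \<notin> Z" "b \<notin> Z"
      then have "a - y \<in> Z" "b - y \<in> Z" using a b by auto
      then have "(a - y) + (b - y) + (y + y) \<in> Z" using yy by (blast intro: add_subgroup_add[OF Z])
      then show ?thesis by (simp add: algebra_simps)
    next
      assume "a \<notin> Z" "b \<in> Z"
      then have "(a - y) + b \<in> Z" using a add_subgroup_add[OF Z] by auto
      then show ?thesis by (simp add: algebra_simps)
    next
      assume "a \<in> Z" "b \<notin> Z"
      then have "a + (b - y) \<in> Z" using b add_subgroup_add[OF Z] by auto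
      then show ?thesis by (simp add: algebra_simps)
    qed (use add_subgroup_add[OF Z] in simp)
  next
    fix a assume a: "a \<in> ?U"
    show "- a \<in> ?U"
    proof (cases "a \<in> Z")
      case False
      then have "a - y \<in> Z" using a by simp
      then have "- (a - y) - (y + y) \<in> Z"
        using add_subgroup_uminus[OF Z] add_subgroup_diff[OF Z] yy by blast
      then show ?thesis by (simp add: algebra_simps)
    qed (use add_subgroup_uminus[OF Z] in simp)
  qed (use add_subgroup_zero[OF Z] in simp)
  ultimately show ?thesis by simp
qed

lemma cosets_Un_translate: "cosets (Z \<union> (+) y ` Z) S = cosets Z S \<union> image ((+) y) ` cosets Z S"
  unfolding cosets_def image_Un image_comp by (simp add: comp_def translate_coset)

lemma card_cosets_Un_translate_le: "card (cosets (Z \<union> (+) y ` Z) S) \<le> 2 * card (cosets Z S)"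
proof (cases "finite (cosets Z S)")
  case True
  have "card (cosets (Z \<union> (+) y ` Z) S) \<le> card (cosets Z S) + card (image ((+) y) ` cosets Z S)"
    unfolding cosets_Un_translate by (rule card_Un_le)
  also have "\<dots> \<le> 2 * card (cosets Z S)" using card_image_le[OF True] by simp
  finally show ?thesis .
qed (simp add: cosets_Un_translate)

lemma card_cosets_Un_translate:
  assumes S: "add_subgroup S" and Z: "add_subgroup Z" and "S \<subseteq> Z" "y \<notin> Z"
    and fin: "finite (cosets Z S)"
  shows "card (cosets (Z \<union> (+) y ` Z) S) = 2 * card (cosets Z S)"
proof -
  have "c \<notin> image ((+) y) ` cosets Z S" if c: "c \<in> cosets Z S" for c
  proof
    assume "c \<in> image ((+) y) ` cosets Z S"
    then obtain b where "b \<in> Z" "c = (+) (y + b) ` S"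
      unfolding cosets_def by (auto simp only: translate_coset)
    moreover obtain a where "a \<in> Z" "c = (+) a ` S" using c unfolding cosets_def by blast
    ultimately have "a - (y + b) \<in> Z" using coset_eq_iff[OF S] \<open>S \<subseteq> Z\<close> by blast
    then have "a - (a - (y + b)) - b \<in> Z" using add_subgroup_diff[OF Z] \<open>a \<in> Z\<close> \<open>b \<in> Z\<close> by blast
    then show False using \<open>y \<notin> Z\<close> by simp
  qed
  then have "cosets Z S \<inter> image ((+) y) ` cosets Z S = {}" by blast
  moreover have "inj_on (image ((+) y)) (cosets Z S)"
    by (rule inj_on_image) (simp add: inj_on_def)
  ultimately show ?thesis
    unfolding cosets_Un_translate by (simp add: card_Un_disjoint fin card_image)
qed

lemma translate_mem_cosets:
  assumes "add_subgroup A" "z \<in> A" "c \<in> cosets A S"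
  shows "(+) z ` c \<in> cosets A S"
proof -
  obtain x where x: "x \<in> A" "c = (+) x ` S" using assms(3) unfolding cosets_def by blast
  have "z + x \<in> A" using add_subgroup_add[OF assms(1,2) x(1)] .
  moreover have "(+) z ` c = (+) (z + x) ` S" using x(2) by (simp only: translate_coset)
  ultimately show ?thesis unfolding cosets_def by (rule rev_image_eqI)
qed

lemma cosets_rep_filter:
  assumes "add_subgroup S" "add_subgroup A" "S \<subseteq> A"
    and invariant: "\<And>x s. x \<in> A \<Longrightarrow> s \<in> S \<Longrightarrow> Q (x + s) \<longleftrightarrow> Q x"
  shows "{c \<in> cosets A S. Q (rep c)} = cosets {x \<in> A. Q x} S"
proof
  show "{c \<in> cosets A S. Q (rep c)} \<subseteq> cosets {x \<in> A. Q x} S"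
  proof
    fix c assume "c \<in> {c \<in> cosets A S. Q (rep c)}"
    then have "rep c \<in> {x \<in> A. Q x}" "c = (+) (rep c) ` S"
      using rep_cosets[OF assms(1-3)] by auto
    then show "c \<in> cosets {x \<in> A. Q x} S" unfolding cosets_def by (rule rev_image_eqI)
  qed
  show "cosets {x \<in> A. Q x} S \<subseteq> {c \<in> cosets A S. Q (rep c)}"
  proof
    fix c assume "c \<in> cosets {x \<in> A. Q x} S"
    then obtain x where x: "x \<in> A" "Q x" "c = (+) x ` S" unfolding cosets_def by blast
    then have "rep c \<in> (+) x ` S" using rep_in_coset[OF assms(1)] by simp
    then obtain s where "s \<in> S" "rep c = x + s" by blast
    then have "Q (rep c)" using invariant x by simp
    moreover have "c \<in> cosets A S" using x unfolding cosets_def by blast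
    ultimately show "c \<in> {c \<in> cosets A S. Q (rep c)}" by blast
  qed
qed

lemma sum_if_const: "finite A \<Longrightarrow> (\<Sum>a\<in>A. if Q a then k else 0) = k * int (card {a \<in> A. Q a})"
  by (simp add: sum.If_cases Int_def mult.commute)

section \<open>Annihilators for a sign-valued pairing\<close>

text \<open>A symmetric pairing on \<open>X/Y\<close> with values in \<open>{1, -1}\<close>, encoded as \<open>P a b \<longleftrightarrow>\<close> the value at
  \<open>(a, b)\<close> is \<open>1\<close>; multiplicativity becomes \<open>P_add\<close>.\<close>
locale sign_pairing =
  fixes X Y :: "'a::ab_group_add set" and P :: "'a \<Rightarrow> 'a \<Rightarrow> bool"
  assumes subgroup_X: "add_subgroup X" and subgroup_Y: "add_subgroup Y" and Y_subset: "Y \<subseteq> X"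
    and P_add: "\<And>a b c. a \<in> X \<Longrightarrow> b \<in> X \<Longrightarrow> c \<in> X \<Longrightarrow> P (a + b) c \<longleftrightarrow> (P a c \<longleftrightarrow> P b c)"
    and P_sym: "\<And>a b. a \<in> X \<Longrightarrow> b \<in> X \<Longrightarrow> P a b \<longleftrightarrow> P b a"
    and P_radical: "\<And>a y. a \<in> X \<Longrightarrow> y \<in> Y \<Longrightarrow> P a y"
begin

abbreviation sign :: "'a \<Rightarrow> 'a \<Rightarrow> int" where
  "sign a b \<equiv> if P a b then 1 else -1"

lemma P_add_right: "a \<in> X \<Longrightarrow> b \<in> X \<Longrightarrow> c \<in> X \<Longrightarrow> P a (b + c) \<longleftrightarrow> (P a b \<longleftrightarrow> P a c)"
  using P_add[of b c a] P_sym[of a "b + c"] P_sym[of a b] P_sym[of a c] add_subgroup_add[OF subgroup_X, of b c]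
  by blast

lemma P_translate_right: "a \<in> X \<Longrightarrow> b \<in> X \<Longrightarrow> y \<in> Y \<Longrightarrow> P a (b + y) \<longleftrightarrow> P a b"
  using P_add_right P_radical Y_subset by blast

lemma P_translate_left: "a \<in> X \<Longrightarrow> b \<in> X \<Longrightarrow> y \<in> Y \<Longrightarrow> P (a + y) b \<longleftrightarrow> P a b"
  using P_add[of a y b] P_sym[of y b] P_radical[of b y] Y_subset by blast

lemma sum_sign:
  assumes Z: "add_subgroup Z" "Y \<subseteq> Z" "Z \<subseteq> X" and x: "x \<in> X"
  shows "(\<Sum>d\<in>cosets Z Y. sign x (rep d)) = (if \<forall>z\<in>Z. P x z then int (card (cosets Z Y)) else 0)"
proof (cases "\<forall>z\<in>Z. P x z")
  case True
  then show ?thesis using rep_cosets(1)[OF subgroup_Y Z(1,2)] by simp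
next
  case False
  then obtain z0 where z0: "z0 \<in> Z" "\<not> P x z0" by blast
  have flip: "sign x (rep ((+) z0 ` d)) = - sign x (rep d)" if d: "d \<in> cosets Z Y" for d
  proof -
    have rd: "rep d \<in> Z" "(+) (rep d) ` Y = d" using rep_cosets[OF subgroup_Y Z(1,2) d] by auto
    then have "rep ((+) z0 ` d) \<in> (+) (z0 + rep d) ` Y"
      using rep_in_coset[OF subgroup_Y] translate_coset by metis
    then obtain y where y: "y \<in> Y" "rep ((+) z0 ` d) = (z0 + rep d) + y" by blast
    have "z0 \<in> X" "rep d \<in> X" "z0 + rep d \<in> X" using z0(1) rd(1) Z(3) add_subgroup_add[OF Z(1)] by auto
    then have "P x (rep ((+) z0 ` d)) \<longleftrightarrow> \<not> P x (rep d)"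
      using y x z0(2) P_translate_right P_add_right by simp
    then show ?thesis by simp
  qed
  have "bij_betw (image ((+) z0)) (cosets Z Y) (cosets Z Y)"
  proof (rule bij_betw_byWitness[where f' = "image ((+) (- z0))"])
    show "image ((+) z0) ` cosets Z Y \<subseteq> cosets Z Y"
      using translate_mem_cosets[OF Z(1) z0(1)] by blast
    show "image ((+) (- z0)) ` cosets Z Y \<subseteq> cosets Z Y"
      using translate_mem_cosets[OF Z(1) add_subgroup_uminus[OF Z(1) z0(1)]] by blast
  qed (simp_all add: image_image)
  then have "(\<Sum>d\<in>cosets Z Y. sign x (rep d)) = (\<Sum>d\<in>cosets Z Y. sign x (rep ((+) z0 ` d)))"
    by (rule sum.reindex_bij_betw[symmetric])
  also have "\<dots> = - (\<Sum>d\<in>cosets Z Y. sign x (rep d))"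
    using flip by (simp add: sum_negf)
  finally show ?thesis unfolding if_not_P[OF False] by simp
qed

theorem card_cosets_annihilator:
  assumes W: "add_subgroup W" "Y \<subseteq> W" "W \<subseteq> X" and finite: "finite (cosets X Y)"
    and nondegenerate: "\<And>w. w \<in> W \<Longrightarrow> \<forall>x\<in>X. P w x \<Longrightarrow> w \<in> Y"
  shows "card (cosets W Y) * card (cosets {x \<in> X. \<forall>w\<in>W. P x w} Y) = card (cosets X Y)"
proof -
  have finite_W: "finite (cosets W Y)" using finite cosets_mono[OF W(3)] finite_subset by blast
  have rep_X: "rep c \<in> X" if "c \<in> cosets X Y" for c
    using rep_cosets(1)[OF subgroup_Y subgroup_X Y_subset that] .
  have rep_W: "rep d \<in> X" if "d \<in> cosets W Y" for d
    using rep_cosets(1)[OF subgroup_Y W(1,2) that] W(3) by blast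
  have "(\<Sum>c\<in>cosets X Y. \<Sum>d\<in>cosets W Y. sign (rep c) (rep d))
      = (\<Sum>c\<in>cosets X Y. if \<forall>w\<in>W. P (rep c) w then int (card (cosets W Y)) else 0)"
    using sum_sign[OF W] rep_X by simp
  also have "\<dots> = int (card (cosets W Y)) * int (card {c \<in> cosets X Y. \<forall>w\<in>W. P (rep c) w})"
    by (rule sum_if_const[OF finite])
  also have "{c \<in> cosets X Y. \<forall>w\<in>W. P (rep c) w} = cosets {x \<in> X. \<forall>w\<in>W. P x w} Y"
    by (rule cosets_rep_filter[OF subgroup_Y subgroup_X Y_subset])
      (use P_translate_left W(3) in blast)
  finally have left: "(\<Sum>c\<in>cosets X Y. \<Sum>d\<in>cosets W Y. sign (rep c) (rep d))
      = int (card (cosets W Y)) * int (card (cosets {x \<in> X. \<forall>w\<in>W. P x w} Y))" .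
  have "(\<Sum>c\<in>cosets X Y. \<Sum>d\<in>cosets W Y. sign (rep c) (rep d))
      = (\<Sum>d\<in>cosets W Y. \<Sum>c\<in>cosets X Y. sign (rep d) (rep c))"
  proof (subst sum.swap, intro sum.cong refl)
    fix d c assume "d \<in> cosets W Y" "c \<in> cosets X Y"
    then show "sign (rep c) (rep d) = sign (rep d) (rep c)" using P_sym rep_X rep_W by presburger
  qed
  also have "\<dots> = (\<Sum>d\<in>cosets W Y. if \<forall>x\<in>X. P (rep d) x then int (card (cosets X Y)) else 0)"
    using sum_sign[OF subgroup_X Y_subset order_refl] rep_W by simp
  also have "\<dots> = int (card (cosets X Y)) * int (card {d \<in> cosets W Y. \<forall>x\<in>X. P (rep d) x})"
    by (rule sum_if_const[OF finite_W])
  also have "{d \<in> cosets W Y. \<forall>x\<in>X. P (rep d) x} = cosets {w \<in> W. \<forall>x\<in>X. P w x} Y"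
    by (rule cosets_rep_filter[OF subgroup_Y W(1,2)])
      (use P_translate_left W(3) in blast)
  also have "{w \<in> W. \<forall>x\<in>X. P w x} = Y"
    using nondegenerate W(2) P_radical P_sym Y_subset by blast
  finally have "int (card (cosets W Y)) * int (card (cosets {x \<in> X. \<forall>w\<in>W. P x w} Y))
      = int (card (cosets X Y))"
    using left cosets_self[OF subgroup_Y] by simp
  then show ?thesis by (simp only: of_nat_mult[symmetric] of_nat_eq_iff)
qed

end

section \<open>Elementary abelian 2-quotients of subgroups of \<open>\<rat>^8\<close>\<close>

lemma chi_mult_eq_smult: "(\<chi> i. c * v $ i) = c *s v"
  by (simp add: vec_eq_iff)

lemma add_subgroup_of_int_smult:
  fixes v :: qvec
  assumes "add_subgroup B" "v \<in> B"
  shows "(of_int k :: rat) *s v \<in> B"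
proof -
  have nat: "(of_nat n :: rat) *s v \<in> B" for n
    by (induction n)
      (simp_all add: add_subgroup_zero[OF assms(1)] add_subgroup_add[OF assms])
  show ?thesis
  proof (cases "k \<ge> 0")
    case True
    then show ?thesis using nat[of "nat k"] by simp
  next
    case False
    then have "(of_int k :: rat) *s v = - ((of_nat (nat (- k)) :: rat) *s v)" by (simp add: vec_eq_iff)
    then show ?thesis using add_subgroup_uminus[OF assms(1) nat] by simp
  qed
qed

lemma add_subgroup_zspan: "add_subgroup (zspan A)"
proof (rule add_subgroupI)
  let ?sum = "\<lambda>cs :: (int \<times> qvec) list. sum_list (map (\<lambda>p. (\<chi> i. of_int (fst p) * snd p $ i)) cs)"
  show "0 \<in> zspan A" unfolding zspan_def by (auto intro!: exI[of _ "[]"])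
  fix x y assume "x \<in> zspan A" "y \<in> zspan A"
  then obtain cs ds where "\<forall>p\<in>set cs. snd p \<in> A" "x = ?sum cs" "\<forall>p\<in>set ds. snd p \<in> A" "y = ?sum ds"
    unfolding zspan_def by blast
  then show "x + y \<in> zspan A" unfolding zspan_def by (intro CollectI exI[of _ "cs @ ds"]) auto
next
  let ?sum = "\<lambda>cs :: (int \<times> qvec) list. sum_list (map (\<lambda>p. (\<chi> i. of_int (fst p) * snd p $ i)) cs)"
  fix x assume "x \<in> zspan A"
  then obtain cs where cs: "\<forall>p\<in>set cs. snd p \<in> A" "x = ?sum cs" unfolding zspan_def by blast
  have "?sum (map (\<lambda>p. (- fst p, snd p)) cs) = - ?sum cs"
    by (induction cs) (auto simp: vec_eq_iff)
  then show "- x \<in> zspan A"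
    unfolding zspan_def using cs by (intro CollectI exI[of _ "map (\<lambda>p. (- fst p, snd p)) cs"]) auto
qed

lemma zspan_superset: "A \<subseteq> zspan A"
proof
  fix a assume "a \<in> A"
  then show "a \<in> zspan A"
    unfolding zspan_def by (intro CollectI exI[of _ "[(1, a)]"]) (simp add: vec_eq_iff)
qed

lemma zspan_minimal:
  assumes "add_subgroup B" "A \<subseteq> B"
  shows "zspan A \<subseteq> B"
proof
  fix x assume "x \<in> zspan A"
  then obtain cs :: "(int \<times> qvec) list" where cs: "\<forall>p\<in>set cs. snd p \<in> A"
      "x = sum_list (map (\<lambda>p. (\<chi> i. of_int (fst p) * snd p $ i)) cs)"
    unfolding zspan_def by blast
  have "sum_list (map (\<lambda>p. (\<chi> i. of_int (fst p) * snd p $ i)) cs) \<in> B"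
    using cs(1)
  proof (induction cs)
    case (Cons p cs)
    then have "(\<chi> i. of_int (fst p) * snd p $ i) \<in> B"
      unfolding chi_mult_eq_smult using add_subgroup_of_int_smult[OF assms(1)] assms(2) by auto
    then show ?case using Cons add_subgroup_add[OF assms(1)] by simp
  qed (simp add: add_subgroup_zero[OF assms(1)])
  then show "x \<in> B" using cs(2) by simp
qed

lemma zspan_mono: "A \<subseteq> B \<Longrightarrow> zspan A \<subseteq> zspan B"
  using zspan_minimal[OF add_subgroup_zspan, of A B] zspan_superset[of B] by blast

lemma zspan_eq_self: "add_subgroup A \<Longrightarrow> zspan A = A"
  using zspan_minimal[of A A] zspan_superset[of A] by blast

lemma zspan_insert_order2:
  assumes "y + y \<in> zspan A"
  shows "zspan (insert y A) = zspan A \<union> (+) y ` zspan A"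
proof
  have "y \<in> (+) y ` zspan A" using add_subgroup_zero[OF add_subgroup_zspan] by force
  then have "insert y A \<subseteq> zspan A \<union> (+) y ` zspan A" using zspan_superset[of A] by blast
  then show "zspan (insert y A) \<subseteq> zspan A \<union> (+) y ` zspan A"
    by (rule zspan_minimal[OF add_subgroup_Un_translate[OF add_subgroup_zspan assms]])
  have "zspan A \<subseteq> zspan (insert y A)" by (rule zspan_mono) blast
  moreover have "y \<in> zspan (insert y A)" using zspan_superset[of "insert y A"] by blast
  ultimately show "zspan A \<union> (+) y ` zspan A \<subseteq> zspan (insert y A)"
    using add_subgroup_add[OF add_subgroup_zspan[of "insert y A"]] by blast
qed

lemma zspan_Cons_order2:
  assumes "add_subgroup Y" "y + y \<in> Y"
  shows "zspan (Y \<union> set (y # ys)) = zspan (Y \<union> set ys) \<union> (+) y ` zspan (Y \<union> set ys)"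
proof -
  have "y + y \<in> zspan (Y \<union> set ys)" using assms(2) zspan_superset by blast
  then show ?thesis using zspan_insert_order2 by simp
qed

lemma card_cosets_zspan_le:
  assumes "add_subgroup Y" "\<forall>y\<in>set ys. y + y \<in> Y"
  shows "card (cosets (zspan (Y \<union> set ys)) Y) \<le> 2 ^ length ys"
  using assms(2)
proof (induction ys)
  case Nil
  then show ?case using zspan_eq_self[OF assms(1)] cosets_self[OF assms(1)] by simp
next
  case (Cons y ys)
  then show ?case
    using zspan_Cons_order2[OF assms(1), of y ys] card_cosets_Un_translate_le[of "zspan (Y \<union> set ys)" y Y]
    by simp
qed

lemma ex_generators_card_cosets:
  assumes Y: "add_subgroup Y" and X: "add_subgroup X" "Y \<subseteq> X"
    and two: "\<forall>x\<in>X. x + x \<in> Y" and finite: "finite (cosets X Y)"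
  shows "\<exists>ys. set ys \<subseteq> X \<and> zspan (Y \<union> set ys) = X \<and> card (cosets X Y) = 2 ^ length ys"
proof -
  txt \<open>Adjoin elements of \<open>X\<close> outside the current span one at a time; each step doubles the index.\<close>
  have greedy: "\<exists>zs. set zs \<subseteq> X \<and> zspan (Y \<union> set zs) = X \<and> card (cosets X Y) = 2 ^ length zs"
    if "set ys \<subseteq> X" "card (cosets (zspan (Y \<union> set ys)) Y) = 2 ^ length ys" for ys
    using that
  proof (induction "card (cosets X Y) - 2 ^ length ys" arbitrary: ys rule: less_induct)
    case less
    define Z where "Z = zspan (Y \<union> set ys)"
    have Z: "add_subgroup Z" "Y \<subseteq> Z" "Z \<subseteq> X"
      unfolding Z_def using add_subgroup_zspan zspan_superset zspan_minimal[OF X(1)] X(2) less.prems(1)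
      by blast+
    show ?case
    proof (cases "Z = X")
      case True
      then show ?thesis using less.prems unfolding Z_def by blast
    next
      case False
      then obtain y where y: "y \<in> X" "y \<notin> Z" using Z(3) by blast
      have span: "zspan (Y \<union> set (y # ys)) = Z \<union> (+) y ` Z"
        unfolding Z_def using zspan_Cons_order2[OF Y] two y(1) by blast
      have "finite (cosets Z Y)" using finite cosets_mono[OF Z(3)] finite_subset by blast
      then have card: "card (cosets (zspan (Y \<union> set (y # ys))) Y) = 2 ^ length (y # ys)"
        unfolding span using card_cosets_Un_translate[OF Y Z(1,2) y(2)] less.prems(2)
        by (simp add: Z_def)
      have "zspan (Y \<union> set (y # ys)) \<subseteq> X"
        using zspan_minimal[OF X(1)] X(2) less.prems(1) y(1) by simp
      then have "card (cosets (zspan (Y \<union> set (y # ys))) Y) \<le> card (cosets X Y)"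
        by (intro card_mono[OF finite] cosets_mono)
      then have "2 ^ length (y # ys) \<le> card (cosets X Y)" unfolding card .
      moreover have "(2::nat) ^ length ys < 2 ^ length (y # ys)" by simp
      ultimately have "card (cosets X Y) - 2 ^ length (y # ys) < card (cosets X Y) - 2 ^ length ys"
        by linarith
      moreover have "set (y # ys) \<subseteq> X" using less.prems(1) y(1) by simp
      ultimately show ?thesis using less.hyps card by blast
    qed
  qed
  have "card (cosets (zspan (Y \<union> set [])) Y) = 2 ^ length []"
    using zspan_eq_self[OF Y] cosets_self[OF Y] by simp
  then show ?thesis using greedy[of "[]"] by simp
qed

theorem card_cosets_eq_power_min_generators:
  assumes Y: "add_subgroup Y" and X: "add_subgroup X" "Y \<subseteq> X"
    and two: "\<forall>x\<in>X. x + x \<in> Y" and finite: "finite (cosets X Y)"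
  shows "card (cosets X Y) = 2 ^ (LEAST k. \<exists>ys. length ys = k \<and> set ys \<subseteq> X \<and> X = zspan (Y \<union> set ys))"
proof -
  obtain ys where ys: "set ys \<subseteq> X" "zspan (Y \<union> set ys) = X" "card (cosets X Y) = 2 ^ length ys"
    using ex_generators_card_cosets[OF assms] by blast
  have "(LEAST k. \<exists>ys. length ys = k \<and> set ys \<subseteq> X \<and> X = zspan (Y \<union> set ys)) = length ys"
  proof (rule Least_equality)
    fix k assume "\<exists>zs. length zs = k \<and> set zs \<subseteq> X \<and> X = zspan (Y \<union> set zs)"
    then obtain zs where zs: "length zs = k" "set zs \<subseteq> X" "X = zspan (Y \<union> set zs)" by blast
    then have "\<forall>y\<in>set zs. y + y \<in> Y" using two by blast
    then have "card (cosets (zspan (Y \<union> set zs)) Y) \<le> 2 ^ length zs"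
      by (rule card_cosets_zspan_le[OF Y])
    then have "card (cosets X Y) \<le> 2 ^ k" using zs(1,3) by simp
    then show "length ys \<le> k" using ys(3) by simp
  qed (use ys in blast)
  then show ?thesis using ys(3) by simp
qed

section \<open>The lattice \<open>U\<^sup>3 \<oplus> [-2]\<^sup>2\<close>\<close>

lemma UNIV_8: "(UNIV :: 8 set) = {0, 1, 2, 3, 4, 5, 6, 7}"
proof -
  have "card {0, 1, 2, 3, 4, 5, 6, 7 :: 8} = 8" "card (UNIV :: 8 set) = 8" by simp_all
  then show ?thesis by (metis card_subset_eq finite subset_UNIV)
qed

lemma forall_8: "(\<forall>i::8. P i) \<longleftrightarrow> P 0 \<and> P 1 \<and> P 2 \<and> P 3 \<and> P 4 \<and> P 5 \<and> P 6 \<and> P 7"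
  by (metis UNIV_I UNIV_8 insert_iff empty_iff)

lemma bform_explicit: "bform x y = x$0*y$1 + x$1*y$0 + x$2*y$3 + x$3*y$2 + x$4*y$5 + x$5*y$4
   - 2*x$6*y$6 - 2*x$7*y$7"
  unfolding bform_def gramL_def UNIV_8 by (simp add: algebra_simps)

lemma bform_sym: "bform x y = bform y x"
  and bform_add_left: "bform (x + y) z = bform x z + bform y z"
  and bform_add_right: "bform z (x + y) = bform z x + bform z y"
  and bform_minus_left: "bform (- x) z = - bform x z"
  and bform_smult_left: "bform (c *s x) z = c * bform x z"
  and bform_smult_right: "bform z (c *s x) = c * bform z x"
  and bform_zero_left: "bform 0 z = 0"
  unfolding bform_explicit by (simp_all add: algebra_simps)

lemma bform_axis:
  "bform x (axis 0 1) = x$1" "bform x (axis 1 1) = x$0" "bform x (axis 2 1) = x$3"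
  "bform x (axis 3 1) = x$2" "bform x (axis 4 1) = x$5" "bform x (axis 5 1) = x$4"
  "bform x (axis 6 1) = -2 * x$6" "bform x (axis 7 1) = -2 * x$7"
  unfolding bform_explicit by (simp_all add: axis_def)

lemma sum_matrix_vector_mult_transpose:
  "(\<Sum>i\<in>UNIV. (A *v x) $ i * y $ i) = (\<Sum>i\<in>UNIV. x $ i * (transpose A *v y) $ i)"
  for A :: "'a::comm_semiring_1 ^ 'n ^ 'm"
  unfolding matrix_vector_mult_def transpose_def
  by (simp add: sum_distrib_left sum_distrib_right, subst sum.swap, simp add: mult_ac)

lemma bform_eq_sum: "bform x y = (\<Sum>i\<in>UNIV. x $ i * (map_matrix of_int gramL *v y) $ i)"
  unfolding bform_def matrix_vector_mult_def by (simp add: sum_distrib_left mult_ac)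

lemma map_matrix_of_int_mult: "map_matrix (of_int :: int \<Rightarrow> rat) (A ** B) = map_matrix of_int A ** map_matrix of_int B"
  by (simp add: vec_eq_iff matrix_matrix_mult_def)

lemma map_matrix_transpose: "map_matrix f (transpose A) = transpose (map_matrix f A)"
  by (simp add: vec_eq_iff transpose_def)

lemma bform_act: assumes "M \<in> OL" shows "bform (act M x) (act M y) = bform x y"
proof -
  let ?Q = "map_matrix (of_int :: int \<Rightarrow> rat) M" and ?G = "map_matrix (of_int :: int \<Rightarrow> rat) gramL"
  have "map_matrix (of_int :: int \<Rightarrow> rat) (transpose M ** gramL ** M) = ?G"
    using assms unfolding OL_def by simp
  then have gram: "transpose ?Q ** ?G ** ?Q = ?G"
    by (simp only: map_matrix_of_int_mult map_matrix_transpose)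
  have "bform (act M x) (act M y) = (\<Sum>i\<in>UNIV. (?Q *v x) $ i * (?G *v (?Q *v y)) $ i)"
    unfolding bform_eq_sum act_def ..
  also have "\<dots> = (\<Sum>i\<in>UNIV. x $ i * ((transpose ?Q ** ?G ** ?Q) *v y) $ i)"
    by (simp add: sum_matrix_vector_mult_transpose matrix_vector_mul_assoc matrix_mul_assoc)
  finally show ?thesis unfolding gram bform_eq_sum .
qed

lemma act_add: "act M (x + y) = act M x + act M y"
  unfolding act_def by (simp add: matrix_vector_right_distrib)

lemma act_smult: "act M (c *s x) = c *s act M x"
  unfolding act_def by (simp add: vec_eq_iff matrix_vector_mult_def sum_distrib_left mult_ac)

lemma act_diff: "act M (x - y) = act M x - act M y"
  unfolding act_def by (simp add: matrix_vector_mult_diff_distrib)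

lemma act_zero: "act M 0 = 0"
  unfolding act_def by simp

lemma act_minus: "act M (- x) = - act M x"
  using act_diff[of M 0 x] by (simp add: act_zero)

lemma act_mult: "act M (act N x) = act (M ** N) x"
  unfolding act_def map_matrix_of_int_mult by (simp add: matrix_vector_mul_assoc)

lemma act_id: "act (mat 1) x = x"
proof -
  have "map_matrix (of_int :: int \<Rightarrow> rat) (mat 1) = mat 1" by (simp add: vec_eq_iff mat_def)
  then show ?thesis unfolding act_def by (metis matrix_vector_mul_lid)
qed

lemma mem_latL_iff: "x \<in> latL \<longleftrightarrow> x$0 \<in> \<int> \<and> x$1 \<in> \<int> \<and> x$2 \<in> \<int> \<and> x$3 \<in> \<int> \<and> x$4 \<in> \<int>
   \<and> x$5 \<in> \<int> \<and> x$6 \<in> \<int> \<and> x$7 \<in> \<int>"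
  unfolding latL_def using forall_8[of "\<lambda>i. x$i \<in> \<int>"] by simp

lemma add_subgroup_latL: "add_subgroup latL"
  unfolding add_subgroup_def latL_def by auto

lemma axis_in_latL: "axis i 1 \<in> latL"
  unfolding latL_def axis_def by auto

lemma bform_latL: "x \<in> latL \<Longrightarrow> y \<in> latL \<Longrightarrow> bform x y \<in> \<int>"
  unfolding mem_latL_iff bform_explicit by (intro Ints_add Ints_diff Ints_mult Ints_numeral; simp)

lemma common_denominator: "\<exists>d::int. d > 0 \<and> (of_int d :: rat) *s x \<in> latL"
proof -
  define q where "q i = quotient_of (x $ i)" for i
  define d where "d = (\<Prod>i\<in>UNIV. snd (q i))"
  have pos: "snd (q i) > 0" for i unfolding q_def by (rule quotient_of_denom_pos')
  have "of_int d * x $ i \<in> \<int>" for i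
  proof -
    have xi: "x $ i = of_int (fst (q i)) / of_int (snd (q i))"
      unfolding q_def by (rule quotient_of_div) simp
    have "d = snd (q i) * (\<Prod>j\<in>UNIV - {i}. snd (q j))"
      unfolding d_def by (simp add: prod.remove)
    then have "of_int d * x $ i = of_int (fst (q i)) * of_int (\<Prod>j\<in>UNIV - {i}. snd (q j))"
      using pos[of i] xi by simp
    then show ?thesis by (metis Ints_of_int of_int_mult)
  qed
  moreover have "d > 0" unfolding d_def using pos by (simp add: prod_pos)
  ultimately show ?thesis unfolding latL_def by auto
qed

lemma qspan_smult: "a \<in> A \<Longrightarrow> c *s a \<in> qspan A"
  unfolding qspan_def by (intro CollectI exI[of _ "[(c, a)]"]) (simp add: vec_eq_iff)

lemma qspan_minimal:
  assumes "0 \<in> V" "\<And>x y. x \<in> V \<Longrightarrow> y \<in> V \<Longrightarrow> x + y \<in> V" "\<And>c x. x \<in> V \<Longrightarrow> c *s x \<in> V"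
    and "A \<subseteq> V"
  shows "qspan A \<subseteq> V"
proof
  fix x assume "x \<in> qspan A"
  then obtain cs :: "(rat \<times> qvec) list" where cs: "\<forall>p\<in>set cs. snd p \<in> A"
      "x = sum_list (map (\<lambda>p. (\<chi> i. fst p * snd p $ i)) cs)"
    unfolding qspan_def by blast
  have "sum_list (map (\<lambda>p. (\<chi> i. fst p * snd p $ i)) cs) \<in> V"
    using cs(1) by (induction cs) (use assms in \<open>auto simp: chi_mult_eq_smult\<close>)
  then show "x \<in> V" using cs(2) by simp
qed

lemma subset_qspan_if_lattice_points:
  assumes "\<And>x. x \<in> V \<Longrightarrow> x \<in> latL \<Longrightarrow> x \<in> A" "\<And>c x. x \<in> V \<Longrightarrow> c *s x \<in> V"
  shows "V \<subseteq> qspan A"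
proof
  fix x assume "x \<in> V"
  obtain d :: int where d: "d > 0" "(of_int d :: rat) *s x \<in> latL" using common_denominator by blast
  then have "(of_int d :: rat) *s x \<in> A" using assms \<open>x \<in> V\<close> by blast
  moreover have "x = (1 / of_int d) *s ((of_int d :: rat) *s x)" using d(1) by simp
  ultimately show "x \<in> qspan A" by (metis qspan_smult)
qed

lemma qspan_latL: "qspan latL = UNIV"
  using subset_qspan_if_lattice_points[of UNIV latL] by blast

lemma mem_dual_latL_iff: "x \<in> dual latL \<longleftrightarrow> (\<forall>s\<in>latL. bform x s \<in> \<int>)"
  unfolding dual_def qspan_latL by simp

lemma Ints_iff_even_double:
  fixes a :: rat
  assumes "2 * a = of_int m"
  shows "a \<in> \<int> \<longleftrightarrow> even m"
proof
  assume "a \<in> \<int>"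
  then obtain k where "a = of_int k" by (auto elim: Ints_cases)
  then have "m = 2 * k" using assms by (metis of_int_eq_iff of_int_mult of_int_numeral)
  then show "even m" by simp
next
  assume "even m"
  then obtain k where "m = 2 * k" by blast
  then have "a = of_int k" using assms by simp
  then show "a \<in> \<int>" by simp
qed

lemma Ints_add_iff_half:
  fixes a b :: rat
  assumes "2 * a \<in> \<int>" "2 * b \<in> \<int>"
  shows "a + b \<in> \<int> \<longleftrightarrow> (a \<in> \<int> \<longleftrightarrow> b \<in> \<int>)"
proof -
  obtain m n where mn: "2 * a = of_int m" "2 * b = of_int n" using assms by (auto elim!: Ints_cases)
  then have "2 * (a + b) = of_int (m + n)" by (simp add: algebra_simps)
  then have "a + b \<in> \<int> \<longleftrightarrow> even (m + n)" by (rule Ints_iff_even_double)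
  then show ?thesis using Ints_iff_even_double[OF mn(1)] Ints_iff_even_double[OF mn(2)] by simp
qed

lemma Ints_diff_iff_half:
  fixes a b :: rat
  assumes "2 * a \<in> \<int>" "2 * b \<in> \<int>"
  shows "a - b \<in> \<int> \<longleftrightarrow> (a \<in> \<int> \<longleftrightarrow> b \<in> \<int>)"
  using Ints_add_iff_half[of a "- b"] assms by simp

lemma mem_dual_latL_coords: "x \<in> dual latL \<longleftrightarrow> x$0 \<in> \<int> \<and> x$1 \<in> \<int> \<and> x$2 \<in> \<int> \<and> x$3 \<in> \<int>
    \<and> x$4 \<in> \<int> \<and> x$5 \<in> \<int> \<and> 2 * x$6 \<in> \<int> \<and> 2 * x$7 \<in> \<int>"
proof
  assume "x \<in> dual latL"
  then have "bform x (axis i 1) \<in> \<int>" for i using axis_in_latL mem_dual_latL_iff by blast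
  then show "x$0 \<in> \<int> \<and> x$1 \<in> \<int> \<and> x$2 \<in> \<int> \<and> x$3 \<in> \<int>
    \<and> x$4 \<in> \<int> \<and> x$5 \<in> \<int> \<and> 2 * x$6 \<in> \<int> \<and> 2 * x$7 \<in> \<int>"
    using bform_axis by (metis minus_in_Ints_iff mult_minus_left)
next
  assume x: "x$0 \<in> \<int> \<and> x$1 \<in> \<int> \<and> x$2 \<in> \<int> \<and> x$3 \<in> \<int>
    \<and> x$4 \<in> \<int> \<and> x$5 \<in> \<int> \<and> 2 * x$6 \<in> \<int> \<and> 2 * x$7 \<in> \<int>"
  have "bform x s \<in> \<int>" if "s \<in> latL" for s
    using x that unfolding mem_latL_iff bform_explicit by (blast intro: Ints_add Ints_diff Ints_mult)
  then show "x \<in> dual latL" using mem_dual_latL_iff by blast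
qed

lemma latL_subset_dual: "latL \<subseteq> dual latL"
  using mem_dual_latL_iff bform_latL by blast

lemma double_in_latL: "x \<in> dual latL \<Longrightarrow> x + x \<in> latL"
  unfolding mem_dual_latL_coords mem_latL_iff by (simp add: mult_2[symmetric])

lemma add_subgroup_dual_latL: "add_subgroup (dual latL)"
  by (rule add_subgroupI)
    (simp_all add: mem_dual_latL_iff bform_zero_left bform_add_left bform_minus_left)

lemma half_axis_in_dual_latL: "i = 6 \<or> i = 7 \<Longrightarrow> (1/2 :: rat) *s axis i 1 \<in> dual latL"
  unfolding mem_dual_latL_coords by (auto simp: axis_def)

lemma mem_latL_if_integral_on_dual:
  assumes "\<forall>w\<in>dual latL. bform z w \<in> \<int>"
  shows "z \<in> latL"
proof -
  have h: "bform z (axis i 1) \<in> \<int>" for i using assms axis_in_latL latL_subset_dual by blast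
  have h6: "bform z ((1/2 :: rat) *s axis 6 1) \<in> \<int>" and h7: "bform z ((1/2 :: rat) *s axis 7 1) \<in> \<int>"
    using assms half_axis_in_dual_latL by blast+
  show ?thesis unfolding mem_latL_iff
    using h[of 0] h[of 1] h[of 2] h[of 3] h[of 4] h[of 5] h6 h7
    by (simp add: bform_axis bform_smult_right)
qed

lemma bform_nondegenerate:
  assumes "\<forall>v\<in>latL. bform y v = 0"
  shows "y = 0"
proof -
  have h: "bform y (axis i 1) = 0" for i using assms axis_in_latL by blast
  show ?thesis unfolding vec_eq_iff forall_8
    using h[of 0] h[of 1] h[of 2] h[of 3] h[of 4] h[of 5] h[of 6] h[of 7] by (simp add: bform_axis)
qed

lemma diff_in_latL_iff_half:
  assumes "x + x \<in> latL" "y + y \<in> latL"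
  shows "x - y \<in> latL \<longleftrightarrow> (\<forall>i. x$i \<in> \<int> \<longleftrightarrow> y$i \<in> \<int>)"
proof -
  have "(x + x)$i \<in> \<int>" "(y + y)$i \<in> \<int>" for i
    using assms unfolding latL_def by blast+
  then have "2 * x$i \<in> \<int>" "2 * y$i \<in> \<int>" for i
    by (simp_all only: vector_add_component mult_2)
  then show ?thesis unfolding latL_def by (simp add: Ints_diff_iff_half)
qed

lemma finite_cosets_half_integral:
  assumes "add_subgroup Y" "Y \<subseteq> latL" and half: "\<forall>x\<in>X. x + x \<in> latL"
    and saturated: "\<And>x y. x \<in> X \<Longrightarrow> y \<in> X \<Longrightarrow> x - y \<in> latL \<Longrightarrow> x - y \<in> Y"
  shows "finite (cosets X Y)"
proof -
  have "x - y \<in> Y \<longleftrightarrow> (\<lambda>i. x$i \<in> \<int>) = (\<lambda>i. y$i \<in> \<int>)" if "x \<in> X" "y \<in> X" for x y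
    using saturated[OF that] assms(2) diff_in_latL_iff_half half that by (auto simp: fun_eq_iff)
  then have "finite (cosets X Y) \<longleftrightarrow> finite ((\<lambda>x. \<lambda>i. x$i \<in> \<int>) ` X)"
    by (rule card_cosets_eq_card_image(2)[OF assms(1)])
  moreover have "finite ((\<lambda>x. \<lambda>i. x$i \<in> \<int>) ` X)" by (rule finite_subset[OF subset_UNIV]) simp
  ultimately show ?thesis by simp
qed

lemma card_cosets_dual_latL: "card (cosets (dual latL) latL) = 4"
proof -
  let ?f = "\<lambda>x :: qvec. (x$6 \<in> \<int>, x$7 \<in> \<int>)"
  have "x - y \<in> latL \<longleftrightarrow> ?f x = ?f y" if "x \<in> dual latL" "y \<in> dual latL" for x y
    using that unfolding mem_dual_latL_coords mem_latL_iff by (simp add: Ints_diff_iff_half)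
  then have "card (cosets (dual latL) latL) = card (?f ` dual latL)"
    by (rule card_cosets_eq_card_image(1)[OF add_subgroup_latL])
  also have "?f ` dual latL = UNIV"
  proof -
    have "1/2 \<notin> (\<int> :: rat set)" using Ints_iff_even_double[of "1/2" 1] by simp
    have "(a, b) \<in> ?f ` dual latL" for a b
    proof (rule rev_image_eqI)
      let ?w = "(if a then 0 else (1/2 :: rat) *s axis 6 1) + (if b then 0 else (1/2 :: rat) *s axis 7 1)"
      show "?w \<in> dual latL"
        using half_axis_in_dual_latL add_subgroup_add[OF add_subgroup_dual_latL]
          add_subgroup_zero[OF add_subgroup_dual_latL] by simp
      show "(a, b) = ?f ?w" using \<open>1/2 \<notin> \<int>\<close> by (simp add: axis_def)
    qed
    then show ?thesis by auto
  qed
  finally show ?thesis by simp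
qed

lemma sign_pairing_bform:
  assumes "add_subgroup X" "add_subgroup Y" "Y \<subseteq> X"
    and double: "\<And>a. a \<in> X \<Longrightarrow> a + a \<in> Y"
    and integral: "\<And>a y. a \<in> X \<Longrightarrow> y \<in> Y \<Longrightarrow> bform a y \<in> \<int>"
  shows "sign_pairing X Y (\<lambda>a b. bform a b \<in> \<int>)"
proof
  fix a b c assume "a \<in> X" "b \<in> X" "c \<in> X"
  then have "2 * bform a c \<in> \<int>" "2 * bform b c \<in> \<int>"
    using double integral bform_sym by (metis bform_add_left mult_2)+
  then show "bform (a + b) c \<in> \<int> \<longleftrightarrow> (bform a c \<in> \<int> \<longleftrightarrow> bform b c \<in> \<int>)"
    unfolding bform_add_left by (rule Ints_add_iff_half)
qed (use assms bform_sym in auto)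

section \<open>An involution acting trivially on the discriminant group\<close>

locale lattice_involution =
  fixes g :: imat
  assumes isometry: "g \<in> OL" and involution: "g ** g = mat 1"
    and trivial_on_discriminant: "\<And>w. w \<in> dual latL \<Longrightarrow> act g w - w \<in> latL"
begin

lemma act_act: "act g (act g x) = x"
  using act_mult[of g g x] involution act_id by simp

lemma bform_act_left: "bform (act g x) y = bform x (act g y)"
  using bform_act[OF isometry, of x "act g y"] act_act by simp

definition eigenspace :: "rat \<Rightarrow> qvec set" where
  "eigenspace \<sigma> = {x. act g x = \<sigma> *s x}"

definition eigenlattice :: "rat \<Rightarrow> qvec set" where
  "eigenlattice \<sigma> = latL \<inter> eigenspace \<sigma>"

definition proj :: "rat \<Rightarrow> qvec \<Rightarrow> qvec" where
  "proj \<sigma> x = (1/2 :: rat) *s (x + \<sigma> *s act g x)"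

lemma add_subgroup_eigenspace: "add_subgroup (eigenspace \<sigma>)"
  by (rule add_subgroupI) (simp_all add: eigenspace_def act_zero act_add act_minus)

lemma smult_mem_eigenspace: "x \<in> eigenspace \<sigma> \<Longrightarrow> c *s x \<in> eigenspace \<sigma>"
  by (simp add: eigenspace_def act_smult mult.commute)

lemma add_subgroup_eigenlattice: "add_subgroup (eigenlattice \<sigma>)"
  unfolding eigenlattice_def by (rule add_subgroup_Int[OF add_subgroup_latL add_subgroup_eigenspace])

lemma mult_sign_sign: "\<sigma> \<in> {1, -1} \<Longrightarrow> \<sigma> * (\<sigma> * a) = (a :: rat)"
  by auto

lemma proj_mem_eigenspace: "\<sigma> \<in> {1, -1} \<Longrightarrow> proj \<sigma> x \<in> eigenspace \<sigma>"
  unfolding eigenspace_def proj_def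
  by (simp add: act_smult act_add act_act vec_eq_iff algebra_simps mult_sign_sign)

lemma proj_eigenspace: "\<sigma> \<in> {1, -1} \<Longrightarrow> x \<in> eigenspace \<sigma> \<Longrightarrow> proj \<sigma> x = x"
  unfolding eigenspace_def proj_def by (simp add: vec_eq_iff algebra_simps mult_sign_sign)

lemma proj_eigenspace_neg: "\<sigma> \<in> {1, -1} \<Longrightarrow> x \<in> eigenspace (- \<sigma>) \<Longrightarrow> proj \<sigma> x = 0"
  unfolding eigenspace_def proj_def by (simp add: vec_eq_iff algebra_simps mult_sign_sign)

lemma proj_add_proj_neg: "proj \<sigma> x + proj (- \<sigma>) x = x"
  unfolding proj_def by (simp add: vec_eq_iff algebra_simps)

lemma proj_add: "proj \<sigma> (x + y) = proj \<sigma> x + proj \<sigma> y"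
  unfolding proj_def by (simp add: act_add vec_eq_iff algebra_simps)

lemma proj_diff: "proj \<sigma> (x - y) = proj \<sigma> x - proj \<sigma> y"
  unfolding proj_def by (simp add: act_diff vec_eq_iff algebra_simps)

lemma bform_act_eigenspace: "u \<in> eigenspace \<sigma> \<Longrightarrow> bform u (act g y) = \<sigma> * bform u y"
  using bform_act_left[of u y] by (simp add: eigenspace_def bform_smult_left)

lemma bform_proj_left: "bform (proj \<sigma> x) y = bform x (proj \<sigma> y)"
  unfolding proj_def
  by (simp add: bform_smult_left bform_smult_right bform_add_left bform_add_right bform_act_left)

lemma bform_proj_eigenspace:
  "\<sigma> \<in> {1, -1} \<Longrightarrow> u \<in> eigenspace \<sigma> \<Longrightarrow> bform u (proj \<sigma> y) = bform u y"
  unfolding proj_def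
  by (simp add: bform_smult_right bform_add_right bform_act_eigenspace mult_sign_sign)

lemma bform_eigenspaces_orthogonal:
  assumes "\<sigma> \<in> {1, -1}" "u \<in> eigenspace \<sigma>" "v \<in> eigenspace (- \<sigma>)"
  shows "bform u v = 0"
proof -
  have "bform u v = bform u (proj \<sigma> v)" using bform_proj_eigenspace[OF assms(1,2)] by simp
  then show ?thesis using proj_eigenspace_neg[OF assms(1,3)] bform_smult_right[of u 0 0] by simp
qed

lemma qspan_eigenlattice: "qspan (eigenlattice \<sigma>) = eigenspace \<sigma>"
proof
  show "qspan (eigenlattice \<sigma>) \<subseteq> eigenspace \<sigma>"
    by (rule qspan_minimal)
      (auto simp: eigenlattice_def smult_mem_eigenspace add_subgroup_zero[OF add_subgroup_eigenspace]
        add_subgroup_add[OF add_subgroup_eigenspace])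
  show "eigenspace \<sigma> \<subseteq> qspan (eigenlattice \<sigma>)"
    by (rule subset_qspan_if_lattice_points) (auto simp: eigenlattice_def smult_mem_eigenspace)
qed

lemma mem_dual_eigenlattice_iff:
  "x \<in> dual (eigenlattice \<sigma>) \<longleftrightarrow> x \<in> eigenspace \<sigma> \<and> (\<forall>s\<in>eigenlattice \<sigma>. bform x s \<in> \<int>)"
  unfolding dual_def qspan_eigenlattice by simp

lemma add_subgroup_dual_eigenlattice: "add_subgroup (dual (eigenlattice \<sigma>))"
  using add_subgroup_eigenspace[of \<sigma>]
  by (intro add_subgroupI)
    (auto simp: mem_dual_eigenlattice_iff bform_zero_left bform_add_left bform_minus_left
      add_subgroup_def)

lemma eigenlattice_subset_dual: "eigenlattice \<sigma> \<subseteq> dual (eigenlattice \<sigma>)"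
  unfolding mem_dual_eigenlattice_iff subset_iff using bform_latL by (auto simp: eigenlattice_def)

lemma eigenlattice_subset_latL: "eigenlattice \<sigma> \<subseteq> latL"
  by (simp add: eigenlattice_def)

lemma add_act_mem_eigenlattice:
  assumes "\<sigma> \<in> {1, -1}" "w \<in> dual latL"
  shows "w + \<sigma> *s act g w \<in> eigenlattice \<sigma>"
proof -
  have "act g w - w \<in> latL" "w + w \<in> latL"
    using trivial_on_discriminant double_in_latL assms(2) by blast+
  then have "w + \<sigma> *s act g w \<in> latL"
  proof (cases "\<sigma> = 1")
    case True
    have "w + \<sigma> *s act g w = (w + w) + (act g w - w)" using True by (simp add: vec_eq_iff)
    then show ?thesis using add_subgroup_add[OF add_subgroup_latL] \<open>act g w - w \<in> latL\<close> \<open>w + w \<in> latL\<close>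
      by metis
  next
    case False
    then have "w + \<sigma> *s act g w = - (act g w - w)" using assms(1) by (simp add: vec_eq_iff)
    then show ?thesis using add_subgroup_uminus[OF add_subgroup_latL] \<open>act g w - w \<in> latL\<close> by metis
  qed
  moreover have "w + \<sigma> *s act g w \<in> eigenspace \<sigma>"
    unfolding eigenspace_def using assms(1)
    by (simp add: act_add act_smult act_act vec_eq_iff algebra_simps mult_sign_sign)
  ultimately show ?thesis unfolding eigenlattice_def by blast
qed

lemma proj_mem_dual_eigenlattice:
  assumes "\<sigma> \<in> {1, -1}" "w \<in> dual latL"
  shows "proj \<sigma> w \<in> dual (eigenlattice \<sigma>)"
  unfolding mem_dual_eigenlattice_iff
proof (intro conjI ballI)
  show "proj \<sigma> w \<in> eigenspace \<sigma>" by (rule proj_mem_eigenspace[OF assms(1)])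
  fix s assume "s \<in> eigenlattice \<sigma>"
  then have "bform (proj \<sigma> w) s = bform w s"
    using bform_proj_left bform_proj_eigenspace[OF assms(1)] bform_sym unfolding eigenlattice_def by auto
  then show "bform (proj \<sigma> w) s \<in> \<int>"
    using assms(2) \<open>s \<in> eigenlattice \<sigma>\<close> eigenlattice_subset_latL unfolding mem_dual_latL_iff by auto
qed

lemma double_mem_eigenlattice:
  assumes "\<sigma> \<in> {1, -1}" "x \<in> dual (eigenlattice \<sigma>)"
  shows "x + x \<in> eigenlattice \<sigma>"
proof -
  have x: "x \<in> eigenspace \<sigma>" "\<forall>s\<in>eigenlattice \<sigma>. bform x s \<in> \<int>"
    using assms(2) mem_dual_eigenlattice_iff by auto
  have "bform (x + x) w \<in> \<int>" if "w \<in> dual latL" for w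
  proof -
    have "bform (x + x) w = bform x w + bform x w" by (rule bform_add_left)
    also have "\<dots> = bform x (w + \<sigma> *s act g w)"
      using assms(1) by (simp add: bform_add_right bform_smult_right bform_act_eigenspace[OF x(1)] mult_sign_sign)
    finally show ?thesis using x(2) add_act_mem_eigenlattice[OF assms(1) that] by simp
  qed
  then have "x + x \<in> latL" by (rule mem_latL_if_integral_on_dual[rule_format])
  moreover have "x + x \<in> eigenspace \<sigma>" using add_subgroup_add[OF add_subgroup_eigenspace x(1) x(1)] .
  ultimately show ?thesis unfolding eigenlattice_def by blast
qed

lemma mem_eigenlattice_if_integral_on_dual:
  assumes "\<sigma> \<in> {1, -1}" "x \<in> eigenspace \<sigma>" "\<forall>y\<in>dual (eigenlattice \<sigma>). bform x y \<in> \<int>"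
  shows "x \<in> eigenlattice \<sigma>"
proof -
  have "bform x w \<in> \<int>" if "w \<in> dual latL" for w
    using assms(3) proj_mem_dual_eigenlattice[OF assms(1) that] bform_proj_eigenspace[OF assms(1,2)]
    by metis
  then have "x \<in> latL" using mem_latL_if_integral_on_dual by blast
  then show ?thesis using assms(2) unfolding eigenlattice_def by blast
qed

lemma finite_cosets_dual_eigenlattice:
  assumes "\<sigma> \<in> {1, -1}"
  shows "finite (cosets (dual (eigenlattice \<sigma>)) (eigenlattice \<sigma>))"
proof (rule finite_cosets_half_integral[OF add_subgroup_eigenlattice eigenlattice_subset_latL])
  show "\<forall>x\<in>dual (eigenlattice \<sigma>). x + x \<in> latL"
    using double_mem_eigenlattice[OF assms] eigenlattice_subset_latL by blast
  fix x y assume "x \<in> dual (eigenlattice \<sigma>)" "y \<in> dual (eigenlattice \<sigma>)" "x - y \<in> latL"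
  then have "x \<in> eigenspace \<sigma>" "y \<in> eigenspace \<sigma>" using mem_dual_eigenlattice_iff by blast+
  then show "x - y \<in> eigenlattice \<sigma>"
    using \<open>x - y \<in> latL\<close> add_subgroup_diff[OF add_subgroup_eigenspace] unfolding eigenlattice_def by blast
qed

lemma card_cosets_dual_eigenlattice:
  assumes "\<sigma> \<in> {1, -1}"
  shows "card (cosets (dual (eigenlattice \<sigma>)) (eigenlattice \<sigma>)) = 2 ^ disc_length (eigenlattice \<sigma>)"
  unfolding disc_length_def
  by (rule card_cosets_eq_power_min_generators[OF add_subgroup_eigenlattice add_subgroup_dual_eigenlattice
        eigenlattice_subset_dual _ finite_cosets_dual_eigenlattice[OF assms]])
    (use double_mem_eigenlattice[OF assms] in blast)

text \<open>\<open>Lplus\<close> and \<open>Lminus\<close> are the invariant lattice \<open>L\<^sup>G\<close> and the coinvariant lattice \<open>L\<^sub>G\<close>.\<close>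

abbreviation Lminus :: "qvec set" where "Lminus \<equiv> eigenlattice (-1)"
abbreviation Lplus :: "qvec set" where "Lplus \<equiv> eigenlattice 1"

lemma proj_zero: "proj \<sigma> 0 = 0"
  by (simp add: proj_def act_zero)

lemma proj_minus: "proj \<sigma> (- x) = - proj \<sigma> x"
  using proj_diff[of \<sigma> 0 x] by (simp add: proj_zero)

lemma add_subgroup_image_proj: "add_subgroup A \<Longrightarrow> add_subgroup (proj \<sigma> ` A)"
  by (rule add_subgroupI)
    (force simp: add_subgroup_def proj_zero proj_add[symmetric] proj_minus[symmetric])+

text \<open>For \<open>A \<subseteq> eigenspace (-1)\<close> and \<open>B \<subseteq> eigenspace 1\<close> this is the orthogonal sum \<open>A \<oplus> B\<close>.\<close>
definition osum :: "qvec set \<Rightarrow> qvec set \<Rightarrow> qvec set" where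
  "osum A B = {x. proj (-1) x \<in> A \<and> proj 1 x \<in> B}"

lemma add_subgroup_osum: "add_subgroup A \<Longrightarrow> add_subgroup B \<Longrightarrow> add_subgroup (osum A B)"
  by (rule add_subgroupI) (simp_all add: osum_def add_subgroup_def proj_zero proj_add proj_minus)

lemma card_cosets_osum:
  assumes A: "add_subgroup A" "add_subgroup A'" "A \<subseteq> A'" "A' \<subseteq> eigenspace (-1)"
    and B: "add_subgroup B" "add_subgroup B'" "B \<subseteq> B'" "B' \<subseteq> eigenspace 1"
  shows "card (cosets (osum A' B') (osum A B)) = card (cosets A' A) * card (cosets B' B)"
    and "finite (cosets (osum A' B') (osum A B)) \<longleftrightarrow> finite (cosets A' A \<times> cosets B' B)"
proof -
  let ?f = "\<lambda>x. ((+) (proj (-1) x) ` A, (+) (proj 1 x) ` B)"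
  have fibres: "x - y \<in> osum A B \<longleftrightarrow> ?f x = ?f y" for x y
    by (simp add: osum_def proj_diff coset_eq_iff[OF A(1)] coset_eq_iff[OF B(1)])
  have "?f ` osum A' B' = cosets A' A \<times> cosets B' B"
  proof
    show "?f ` osum A' B' \<subseteq> cosets A' A \<times> cosets B' B" by (auto simp: osum_def cosets_def)
    show "cosets A' A \<times> cosets B' B \<subseteq> ?f ` osum A' B'"
    proof
      fix p assume "p \<in> cosets A' A \<times> cosets B' B"
      then obtain a b where ab: "a \<in> A'" "b \<in> B'" "p = ((+) a ` A, (+) b ` B)"
        unfolding cosets_def by blast
      have "a \<in> eigenspace (-1)" "b \<in> eigenspace 1" using ab A(4) B(4) by blast+
      then have "proj (-1) (a + b) = a" "proj 1 (a + b) = b"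
        using proj_eigenspace[of "-1" a] proj_eigenspace_neg[of "-1" b]
          proj_eigenspace[of 1 b] proj_eigenspace_neg[of 1 a]
        by (simp_all add: proj_add)
      then show "p \<in> ?f ` osum A' B'" using ab by (force simp: osum_def)
    qed
  qed
  then show "card (cosets (osum A' B') (osum A B)) = card (cosets A' A) * card (cosets B' B)"
    and "finite (cosets (osum A' B') (osum A B)) \<longleftrightarrow> finite (cosets A' A \<times> cosets B' B)"
    using card_cosets_eq_card_image[OF add_subgroup_osum[OF A(1) B(1)] fibres]
    by (simp_all add: card_cartesian_product)
qed

lemma dual_eigenlattice_subset_osum:
  "\<sigma> \<in> {1, -1} \<Longrightarrow> dual (eigenlattice \<sigma>) \<subseteq> osum (dual Lminus) (dual Lplus)"
  using add_subgroup_zero[OF add_subgroup_dual_eigenlattice]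
  by (auto simp: osum_def mem_dual_eigenlattice_iff proj_eigenspace proj_eigenspace_neg[of 1, simplified]
      proj_eigenspace_neg[of "-1", simplified])

lemma dual_latL_subset_osum: "dual latL \<subseteq> osum (dual Lminus) (dual Lplus)"
  using proj_mem_dual_eigenlattice by (auto simp: osum_def)

lemma osum_subset_latL: "osum Lminus Lplus \<subseteq> latL"
proof
  fix x assume "x \<in> osum Lminus Lplus"
  then have "proj (-1) x + proj 1 x \<in> latL"
    using add_subgroup_add[OF add_subgroup_latL] eigenlattice_subset_latL by (auto simp: osum_def)
  then show "x \<in> latL" using proj_add_proj_neg[of "-1" x] by simp
qed

lemma bform_osum_integral:
  assumes "m \<in> osum Lminus Lplus" "c \<in> osum (dual Lminus) (dual Lplus)"
  shows "bform m c \<in> \<int>"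
proof -
  have "bform (proj \<sigma> m) c = bform (proj \<sigma> c) (proj \<sigma> m)" if "\<sigma> \<in> {1, -1}" for \<sigma>
    using bform_proj_eigenspace[OF that proj_mem_eigenspace[OF that]] bform_sym by metis
  moreover have "bform (proj \<sigma> c) (proj \<sigma> m) \<in> \<int>" if "\<sigma> \<in> {1, -1}" for \<sigma>
    using assms that unfolding osum_def mem_dual_eigenlattice_iff by auto
  moreover have "bform m c = bform (proj (-1) m) c + bform (proj 1 m) c"
    using proj_add_proj_neg[of "-1" m] bform_add_left by (metis minus_minus)
  ultimately show ?thesis by (metis Ints_add insertCI)
qed

lemma add_subgroup_osum_eigenlattices: "add_subgroup (osum Lminus Lplus)"
  and add_subgroup_osum_duals: "add_subgroup (osum (dual Lminus) (dual Lplus))"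
  by (simp_all add: add_subgroup_osum add_subgroup_eigenlattice add_subgroup_dual_eigenlattice)

lemma osum_subset_osum_duals: "osum Lminus Lplus \<subseteq> osum (dual Lminus) (dual Lplus)"
  using eigenlattice_subset_dual by (auto simp: osum_def)

lemma card_cosets_osum_duals:
  "card (cosets (osum (dual Lminus) (dual Lplus)) (osum Lminus Lplus))
     = card (cosets (dual Lminus) Lminus) * card (cosets (dual Lplus) Lplus)"
  and finite_cosets_osum_duals: "finite (cosets (osum (dual Lminus) (dual Lplus)) (osum Lminus Lplus))"
proof -
  have "dual Lminus \<subseteq> eigenspace (-1)" "dual Lplus \<subseteq> eigenspace 1"
    using mem_dual_eigenlattice_iff by blast+
  note osum = card_cosets_osum[OF add_subgroup_eigenlattice add_subgroup_dual_eigenlattice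
      eigenlattice_subset_dual this(1) add_subgroup_eigenlattice add_subgroup_dual_eigenlattice
      eigenlattice_subset_dual this(2)]
  show "card (cosets (osum (dual Lminus) (dual Lplus)) (osum Lminus Lplus))
     = card (cosets (dual Lminus) Lminus) * card (cosets (dual Lplus) Lplus)"
    by (rule osum(1))
  show "finite (cosets (osum (dual Lminus) (dual Lplus)) (osum Lminus Lplus))"
    using osum(2) finite_cosets_dual_eigenlattice[of "-1"] finite_cosets_dual_eigenlattice[of 1] by simp
qed

lemma card_cosets_latL_mult_dual:
  "card (cosets latL (osum Lminus Lplus)) * card (cosets (dual latL) (osum Lminus Lplus))
     = card (cosets (osum (dual Lminus) (dual Lplus)) (osum Lminus Lplus))"
proof -
  interpret sign_pairing "osum (dual Lminus) (dual Lplus)" "osum Lminus Lplus" "\<lambda>a b. bform a b \<in> \<int>"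
  proof (rule sign_pairing_bform[OF add_subgroup_osum_duals add_subgroup_osum_eigenlattices
        osum_subset_osum_duals])
    fix a assume "a \<in> osum (dual Lminus) (dual Lplus)"
    then show "a + a \<in> osum Lminus Lplus"
      unfolding osum_def mem_Collect_eq proj_add
      using double_mem_eigenlattice[of "-1"] double_mem_eigenlattice[of 1] by simp
  next
    fix a y assume "a \<in> osum (dual Lminus) (dual Lplus)" "y \<in> osum Lminus Lplus"
    then show "bform a y \<in> \<int>" using bform_osum_integral bform_sym by metis
  qed
  have nondegenerate: "w \<in> osum Lminus Lplus"
    if "w \<in> latL" "\<forall>x\<in>osum (dual Lminus) (dual Lplus). bform w x \<in> \<int>" for w
  proof -
    have "proj \<sigma> w \<in> eigenlattice \<sigma>" if \<sigma>: "\<sigma> \<in> {1, -1}" for \<sigma>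
    proof (rule mem_eigenlattice_if_integral_on_dual[OF \<sigma> proj_mem_eigenspace[OF \<sigma>]], intro ballI)
      fix y assume y: "y \<in> dual (eigenlattice \<sigma>)"
      then have "bform w y \<in> \<int>" using dual_eigenlattice_subset_osum[OF \<sigma>] \<open>\<forall>x\<in>_. _\<close> by blast
      moreover have "proj \<sigma> y = y" using y \<sigma> proj_eigenspace mem_dual_eigenlattice_iff by blast
      ultimately show "bform (proj \<sigma> w) y \<in> \<int>" by (simp add: bform_proj_left)
    qed
    then show ?thesis by (simp add: osum_def)
  qed
  have "{x \<in> osum (dual Lminus) (dual Lplus). \<forall>w\<in>latL. bform x w \<in> \<int>} = dual latL"
    using dual_latL_subset_osum mem_dual_latL_iff by blast
  then show ?thesis
    using card_cosets_annihilator[OF add_subgroup_latL osum_subset_latL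
        latL_subset_dual[THEN subset_trans, OF dual_latL_subset_osum] finite_cosets_osum_duals]
      nondegenerate by simp
qed

lemma card_cosets_dual_latL_osum:
  "card (cosets (dual latL) (osum Lminus Lplus)) = 4 * card (cosets latL (osum Lminus Lplus))"
  using card_cosets_tower[OF add_subgroup_osum_eigenlattices add_subgroup_latL add_subgroup_dual_latL
      osum_subset_latL latL_subset_dual]
  by (simp add: card_cosets_dual_latL)

lemma card_cosets_latL_osum:
  "card (cosets latL (osum Lminus Lplus)) = card (cosets (proj (-1) ` latL) Lminus)"
proof -
  have "x - y \<in> osum Lminus Lplus \<longleftrightarrow> (+) (proj (-1) x) ` Lminus = (+) (proj (-1) y) ` Lminus"
    if "x \<in> latL" "y \<in> latL" for x y
  proof -
    have d: "x - y \<in> latL" using add_subgroup_diff[OF add_subgroup_latL that] .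
    have "proj 1 (x - y) \<in> Lplus" if "proj (-1) (x - y) \<in> Lminus"
    proof -
      have "proj 1 (x - y) = (x - y) - proj (-1) (x - y)" using proj_add_proj_neg[of 1 "x - y"] by (metis add_diff_cancel_right')
      then have "proj 1 (x - y) \<in> latL"
        using add_subgroup_diff[OF add_subgroup_latL d] that eigenlattice_subset_latL by auto
      then show ?thesis using proj_mem_eigenspace[of 1] by (simp add: eigenlattice_def)
    qed
    then have "x - y \<in> osum Lminus Lplus \<longleftrightarrow> proj (-1) (x - y) \<in> Lminus" by (auto simp: osum_def)
    then show ?thesis by (simp add: proj_diff coset_eq_iff[OF add_subgroup_eigenlattice])
  qed
  then have "card (cosets latL (osum Lminus Lplus)) = card ((\<lambda>x. (+) (proj (-1) x) ` Lminus) ` latL)"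
    by (rule card_cosets_eq_card_image(1)[OF add_subgroup_osum_eigenlattices])
  then show ?thesis by (simp add: cosets_def image_image)
qed

lemma eigenlattice_subset_image_proj: "Lminus \<subseteq> proj (-1) ` latL"
  using proj_eigenspace[of "-1"] by (force simp: eigenlattice_def)

lemma card_cosets_proj_latL_mult_emb:
  "card (cosets (proj (-1) ` latL) Lminus) * card (cosets (dual latL \<inter> eigenspace (-1)) Lminus)
     = card (cosets (dual Lminus) Lminus)"
proof -
  interpret sign_pairing "dual Lminus" Lminus "\<lambda>a b. bform a b \<in> \<int>"
    by (rule sign_pairing_bform[OF add_subgroup_dual_eigenlattice add_subgroup_eigenlattice
          eigenlattice_subset_dual])
      (use double_mem_eigenlattice[of "-1"] mem_dual_eigenlattice_iff in auto)
  have "proj (-1) ` latL \<subseteq> dual Lminus"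
    using proj_mem_dual_eigenlattice[of "-1"] latL_subset_dual by auto
  moreover have "w \<in> Lminus" if "w \<in> proj (-1) ` latL" "\<forall>x\<in>dual Lminus. bform w x \<in> \<int>" for w
    using mem_eigenlattice_if_integral_on_dual[of "-1" w] proj_mem_eigenspace[of "-1"] that by auto
  moreover have "{x \<in> dual Lminus. \<forall>w\<in>proj (-1) ` latL. bform x w \<in> \<int>}
      = dual latL \<inter> eigenspace (-1)"
  proof (intro equalityI subsetI)
    fix x assume "x \<in> {x \<in> dual Lminus. \<forall>w\<in>proj (-1) ` latL. bform x w \<in> \<int>}"
    then have "x \<in> eigenspace (-1)" "\<forall>v\<in>latL. bform x (proj (-1) v) \<in> \<int>"
      by (auto simp: mem_dual_eigenlattice_iff)
    then show "x \<in> dual latL \<inter> eigenspace (-1)"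
      using bform_proj_eigenspace[of "-1"] by (simp add: mem_dual_latL_iff)
  next
    fix x assume "x \<in> dual latL \<inter> eigenspace (-1)"
    then have "x \<in> eigenspace (-1)" "\<forall>v\<in>latL. bform x v \<in> \<int>" by (auto simp: mem_dual_latL_iff)
    then show "x \<in> {x \<in> dual Lminus. \<forall>w\<in>proj (-1) ` latL. bform x w \<in> \<int>}"
      using bform_proj_eigenspace[of "-1"] eigenlattice_subset_latL[of "-1"]
      by (auto simp: mem_dual_eigenlattice_iff)
  qed
  ultimately show ?thesis
    using card_cosets_annihilator[OF add_subgroup_image_proj[OF add_subgroup_latL] eigenlattice_subset_image_proj _
        finite_cosets_dual_eigenlattice[of "-1"]]
    by simp
qed

theorem card_dual_invariant_mult_emb_square:
  "card (cosets (dual Lplus) Lplus) * card (cosets (dual latL \<inter> eigenspace (-1)) Lminus) ^ 2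
     = 4 * card (cosets (dual Lminus) Lminus)"
proof -
  define a where "a = card (cosets (dual Lminus) Lminus)"
  define b where "b = card (cosets (dual Lplus) Lplus)"
  define p where "p = card (cosets (proj (-1) ` latL) Lminus)"
  define h where "h = card (cosets (dual latL \<inter> eigenspace (-1)) Lminus)"
  have ph: "p * h = a"
    unfolding p_def h_def a_def by (rule card_cosets_proj_latL_mult_emb)
  have "p * (4 * p) = card (cosets latL (osum Lminus Lplus)) * card (cosets (dual latL) (osum Lminus Lplus))"
    unfolding p_def card_cosets_dual_latL_osum card_cosets_latL_osum ..
  also have "\<dots> = a * b"
    unfolding a_def b_def card_cosets_latL_mult_dual card_cosets_osum_duals ..
  also have "\<dots> = p * (h * b)" using ph by (simp add: mult.assoc)
  finally have "p * (4 * p) = p * (h * b)" .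
  moreover have "p > 0"
  proof -
    have "cosets (proj (-1) ` latL) Lminus \<subseteq> cosets (dual Lminus) Lminus"
      by (rule cosets_mono) (use proj_mem_dual_eigenlattice[of "-1"] latL_subset_dual in auto)
    then have "finite (cosets (proj (-1) ` latL) Lminus)"
      using finite_cosets_dual_eigenlattice[of "-1"] finite_subset by auto
    then show ?thesis
      unfolding p_def by (rule card_cosets_pos[OF add_subgroup_eigenlattice eigenlattice_subset_image_proj])
  qed
  ultimately have hb: "4 * p = h * b" by simp
  have "h ^ 2 * b = h * (h * b)" by (simp add: power2_eq_square)
  also have "\<dots> = 4 * (p * h)" unfolding hb[symmetric] by simp
  finally have "h ^ 2 * b = 4 * a" unfolding ph .
  then show ?thesis unfolding a_def b_def h_def by (simp add: mult.commute)
qed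

lemma orthogonal_complement_Lplus: "{x \<in> latL. \<forall>y\<in>Lplus. bform x y = 0} = Lminus"
proof (intro equalityI subsetI)
  fix x assume "x \<in> Lminus"
  then show "x \<in> {x \<in> latL. \<forall>y\<in>Lplus. bform x y = 0}"
    using bform_eigenspaces_orthogonal[of "-1" x] by (auto simp: eigenlattice_def)
next
  fix x assume x: "x \<in> {x \<in> latL. \<forall>y\<in>Lplus. bform x y = 0}"
  have "bform (proj 1 x) v = 0" if "v \<in> latL" for v
  proof -
    have "v + 1 *s act g v \<in> Lplus" using add_act_mem_eigenlattice[of 1 v] latL_subset_dual that by auto
    then have "bform x (v + 1 *s act g v) = 0" using x by blast
    have "bform (proj 1 x) v = bform x (proj 1 v)" by (rule bform_proj_left)
    also have "\<dots> = 1/2 * bform x (v + 1 *s act g v)" unfolding proj_def bform_smult_right ..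
    finally show ?thesis using \<open>bform x (v + 1 *s act g v) = 0\<close> by simp
  qed
  then have "proj 1 x = 0" by (simp add: bform_nondegenerate)
  then have "x = proj (-1) x" using proj_add_proj_neg[of "-1" x] by simp
  then have "x \<in> eigenspace (-1)" using proj_mem_eigenspace[of "-1" x] by simp
  then show "x \<in> Lminus" using x by (simp add: eigenlattice_def)
qed

lemma carrier_emb_grp: "carrier (emb_grp Lminus) = cosets (dual latL \<inter> eigenspace (-1)) Lminus"
  by (simp add: emb_grp_def quot_grp_def qspan_eigenlattice cosets_def coset_def)


lemma power_disc_length_emb_grp:
  "2 ^ disc_length Lplus * card (carrier (emb_grp Lminus)) ^ 2 = (2::nat) ^ (disc_length Lminus + 2)"
  using card_dual_invariant_mult_emb_square card_cosets_dual_eigenlattice[of 1]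
    card_cosets_dual_eigenlattice[of "-1"]
  unfolding carrier_emb_grp by (simp add: power_add mult.commute)

lemma invL_eq: "invL {mat 1, g} = Lplus"
  by (auto simp: invL_def eigenlattice_def eigenspace_def act_id)

lemma coinvL_eq: "coinvL {mat 1, g} = Lminus"
  unfolding coinvL_def invL_eq by (rule orthogonal_complement_Lplus)

end

lemma disc_lengths_if_power_eq:
  fixes lT lS h :: nat
  assumes "2 ^ lT * h ^ 2 = (2::nat) ^ (lS + 2)"
  shows "h = 1 \<Longrightarrow> int lT = int lS + 2" and "h = 2 \<Longrightarrow> lT = lS" and "h = 4 \<Longrightarrow> int lT = int lS - 2"
proof -
  assume "h = 1"
  then have "(2::nat) ^ lT = 2 ^ (lS + 2)" using assms by simp
  then have "lT = lS + 2" by (rule power_inject_exp[THEN iffD1, rotated]) simp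
  then show "int lT = int lS + 2" by simp
next
  assume "h = 2"
  then have "(2::nat) ^ (lT + 2) = 2 ^ (lS + 2)" using assms by (simp add: power_add)
  then show "lT = lS" by simp
next
  assume "h = 4"
  then have "(2::nat) ^ (lT + 4) = 2 ^ (lS + 2)" using assms by (simp add: power_add)
  then have "lT + 4 = lS + 2" by (rule power_inject_exp[THEN iffD1, rotated]) simp
  then show "int lT = int lS - 2" by simp
qed

lemma involution_if_card_2:
  assumes "is_subgroup_OL G" "card G = 2"
  obtains g where "G = {mat 1, g}" "g \<in> OL" "g ** g = mat 1"
proof -
  have G: "G \<subseteq> OL" "mat 1 \<in> G" "\<forall>a\<in>G. \<exists>b\<in>G. a ** b = mat 1"
    using assms(1) unfolding is_subgroup_OL_def by auto
  obtain a b where ab: "G = {a, b}" "a \<noteq> b" using assms(2) unfolding card_2_iff by blast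
  then have "\<exists>g. G = {mat 1, g} \<and> g \<noteq> mat 1"
    using G(2) by (cases "a = mat 1") (auto simp: insert_commute)
  then obtain g where g: "G = {mat 1, g}" "g \<noteq> mat 1" by blast
  then obtain h where "h \<in> G" "g ** h = mat 1" using G(3) by blast
  then have "g ** g = mat 1" using g by auto
  then show ?thesis using that g G(1) by blast
qed

theorem proposition4p3:
  fixes G :: "(int ^ 8 ^ 8) set"
  assumes "is_subgroup_OL G"
    and "card G = 2"
    and "trivial_on_disc G"
  shows "(card (carrier (emb_grp (coinvL G))) = 1 \<longrightarrow>
            int (disc_length (invL G)) = int (disc_length (coinvL G)) + 2)
       \<and> (emb_grp (coinvL G) \<cong> integer_mod_group 2 \<longrightarrow>
            disc_length (invL G) = disc_length (coinvL G))
       \<and> (emb_grp (coinvL G) \<cong> integer_mod_group 2 \<times>\<times> integer_mod_group 2 \<longrightarrow>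
            int (disc_length (invL G)) = int (disc_length (coinvL G)) - 2)"
proof -
  obtain g where g: "G = {mat 1, g}" "g \<in> OL" "g ** g = mat 1"
    using involution_if_card_2[OF assms(1,2)] .
  interpret lattice_involution g
    using g assms(3) by unfold_locales (auto simp: trivial_on_disc_def)
  have count: "2 ^ disc_length (invL G) * card (carrier (emb_grp (coinvL G))) ^ 2
      = (2::nat) ^ (disc_length (coinvL G) + 2)"
    unfolding g(1) invL_eq coinvL_eq by (rule power_disc_length_emb_grp)
  have "card (carrier (integer_mod_group 2)) = 2"
    and "card (carrier (integer_mod_group 2 \<times>\<times> integer_mod_group 2)) = 4"
    by (simp_all add: carrier_integer_mod_group card_cartesian_product)
  then show ?thesis using disc_lengths_if_power_eq[OF count] by (auto dest!: iso_same_card)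
qed

end
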